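(* Let $P$ be a finite poset and $R$ a restriction function on $P$. If $f\in\mathrm{Inc}^R(P)$ has two distinct raisable elements, then $f$ is not meet-irreducible in $\mathrm{Inc}^R(P)$.
   Context: A restriction function assigns to each $p\in P$ a nonempty finite set $R(p)\subseteq\mathbb{Z}$. $\mathrm{Inc}^R(P)$ is the set of $f:P\to\mathbb{Z}$ with $f(p)\in R(p)$ and $p_1<p_2\Rightarrow f(p_1)<f(p_2)$, ordered pointwise, a lattice with pointwise min as meet. An element $p\in P$ is raisable in $f$ if there exists $g\in\mathrm{Inc}^R(P)$ with $f(p)<g(p)$ and $g(p')=f(p')$ for all $p'\ne p$. An element $x$ of a lattice is meet-irreducible if it is not the top element and $x=y\wedge z$ implies $x=y$ or $x=z$. *)

theory Defs
  imports Main
begin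

text \<open>A finite poset is modelled as a finite carrier set P inside an ordered type 'a,
  with the induced order. Functions P -> Z are represented as total functions
  'a => int that are 0 outside P (so they are determined by their values on P).\<close>

definition restriction :: "'a set \<Rightarrow> ('a \<Rightarrow> int set) \<Rightarrow> bool" where
  "restriction P R \<longleftrightarrow> (\<forall>p\<in>P. R p \<noteq> {} \<and> finite (R p))"

definition IncR :: "'a::order set \<Rightarrow> ('a \<Rightarrow> int set) \<Rightarrow> ('a \<Rightarrow> int) set" where
  "IncR P R = {f. (\<forall>p\<in>P. f p \<in> R p)
               \<and> (\<forall>p1\<in>P. \<forall>p2\<in>P. p1 < p2 \<longrightarrow> f p1 < f p2)
               \<and> (\<forall>x. x \<notin> P \<longrightarrow> f x = 0)}"

definition raisable :: "'a::order set \<Rightarrow> ('a \<Rightarrow> int set) \<Rightarrow> ('a \<Rightarrow> int) \<Rightarrow> 'a \<Rightarrow> bool" where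
  "raisable P R f p \<longleftrightarrow>
     (\<exists>g\<in>IncR P R. f p < g p \<and> (\<forall>p'\<in>P. p' \<noteq> p \<longrightarrow> g p' = f p'))"

text \<open>Meet-irreducibility in the lattice L (ordered pointwise, meet = pointwise min,
  i.e. inf on functions).\<close>
definition is_top :: "('a \<Rightarrow> int) set \<Rightarrow> ('a \<Rightarrow> int) \<Rightarrow> bool" where
  "is_top L x \<longleftrightarrow> x \<in> L \<and> (\<forall>y\<in>L. y \<le> x)"

definition meet_irreducible :: "('a \<Rightarrow> int) set \<Rightarrow> ('a \<Rightarrow> int) \<Rightarrow> bool" where
  "meet_irreducible L x \<longleftrightarrow> x \<in> L \<and> \<not> is_top L x \<and>
     (\<forall>y\<in>L. \<forall>z\<in>L. x = inf y z \<longrightarrow> x = y \<or> x = z)"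

end

theory Submission
  imports Defs
begin

text \<open>Raising f at p and at q gives g and h above f; since p \<noteq> q, every point keeps its
  f-value in g or in h, so f is the meet of two elements different from it.\<close>

lemma IncR_outside: "f \<in> IncR P R \<Longrightarrow> x \<notin> P \<Longrightarrow> f x = 0"
  unfolding IncR_def by blast

lemma raisable_obtain_raise:
  assumes "f \<in> IncR P R" "raisable P R f p"
  obtains g where "g \<in> IncR P R" "f \<le> g" "f \<noteq> g"
    and "\<And>x. x \<noteq> p \<Longrightarrow> g x = f x"
proof -
  from assms(2) obtain g
    where g: "g \<in> IncR P R" "f p < g p" "\<forall>x\<in>P. x \<noteq> p \<longrightarrow> g x = f x"
    unfolding raisable_def by blast
  have same: "g x = f x" if "x \<noteq> p" for x
    using g(1,3) assms(1) that by (cases "x \<in> P") (auto simp: IncR_outside)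
  have "f \<le> g"
    unfolding le_fun_def using same g(2) by (metis order.refl less_imp_le)
  moreover have "f \<noteq> g"
    using g(2) by auto
  ultimately show thesis
    using that g(1) same by blast
qed

lemma inf_of_raises_at_distinct_points:
  fixes f g h :: "'a \<Rightarrow> int"
  assumes "p \<noteq> q" "f \<le> g" "f \<le> h"
    and "\<And>x. x \<noteq> p \<Longrightarrow> g x = f x"
    and "\<And>x. x \<noteq> q \<Longrightarrow> h x = f x"
  shows "f = inf g h"
proof
  fix x
  have "g x = f x \<or> h x = f x"
    using assms(1,4,5) by metis
  then show "f x = inf g h x"
    using assms(2,3) by (auto simp: le_fun_def inf_min)
qed

theorem lemma2p5:
  fixes P :: "'a::order set" and R :: "'a \<Rightarrow> int set" and f :: "'a \<Rightarrow> int"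
  assumes "finite P"
    and "restriction P R"
    and "f \<in> IncR P R"
    and "p \<in> P" and "q \<in> P" and "p \<noteq> q"
    and "raisable P R f p" and "raisable P R f q"
  shows "\<not> meet_irreducible (IncR P R) f"
proof
  assume irreducible: "meet_irreducible (IncR P R) f"
  obtain g where g: "g \<in> IncR P R" "f \<le> g" "f \<noteq> g" "\<And>x. x \<noteq> p \<Longrightarrow> g x = f x"
    using raisable_obtain_raise[OF assms(3,7)] by blast
  obtain h where h: "h \<in> IncR P R" "f \<le> h" "f \<noteq> h" "\<And>x. x \<noteq> q \<Longrightarrow> h x = f x"
    using raisable_obtain_raise[OF assms(3,8)] by blast
  have "f = inf g h"
    using inf_of_raises_at_distinct_points[OF assms(6) g(2) h(2) g(4) h(4)] .
  then show False
    using irreducible g(1,3) h(1,3) unfolding meet_irreducible_def by blast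
qed

end
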